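(* Let $n\ge 3$, $m=3\binom{n}{2}+2\binom{n}{3}$ and $\mathbb{P}_n=\mathbb{Z}^{2n}\oplus\mathbb{F}_2^{m}$, whose elements are written $\overline{\alpha}=\big((\alpha_l)_{1\le l\le 2n};(\alpha^1_{ij})_{i<j};(\alpha^2_{ij})_{i<j};(\alpha^3_{ij})_{i<j};(\alpha^1_{ijk})_{i<j<k};(\alpha^2_{ijk})_{i<j<k}\big)$ with indices in $\{1,\dots,n\}$, $\alpha_l\in\mathbb{Z}$ and all other coordinates in $\mathbb{F}_2$. Define $\overline{\alpha}\cdot\overline{\beta}=\overline{\alpha}+\overline{\beta}+\overline{\tau}$, where $\overline{\tau}$ has its first $2n$ coordinates equal to $0$ and its other coordinates given modulo $2$ (integers reduced mod 2) by: for $i<j$, $\tau^1_{ij}=\alpha_j\beta_i$, $\tau^2_{ij}=\alpha_{j+n}\beta_{i+n}$, $\tau^3_{ij}=\alpha_{i+n}\beta_j+\alpha_{j+n}\beta_i$; for $i<j<k$, $\tau^1_{ijk}=\alpha^3_{ij}\beta_k+\alpha^3_{ik}\beta_j+\alpha^3_{jk}\beta_i+\alpha_{i+n}\beta_j\beta_k+\alpha_{j+n}\beta_i\beta_k+\alpha_{k+n}\beta_i\beta_j$, $\tau^2_{ijk}=\alpha^3_{ij}\beta_{k+n}+\alpha^3_{ik}\beta_{j+n}+\alpha^3_{jk}\beta_{i+n}+\alpha_{i+n}\alpha_{j+n}\beta_k+\alpha_{i+n}\alpha_{k+n}\beta_j+\alpha_{j+n}\alpha_{k+n}\beta_i+\alpha_{i+n}(\beta_j\beta_{k+n}+\beta_{j+n}\beta_k)+\alpha_{j+n}(\beta_i\beta_{k+n}+\beta_{i+n}\beta_k)+\alpha_{k+n}(\beta_i\beta_{j+n}+\beta_{i+n}\beta_j)$.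 Then $\mathbb{P}_n$ with this product is a group. *)

theory Defs
  imports Main "HOL-Algebra.Group"
begin

text \<open>Integer coordinates alpha_l (1 <= l <= 2n) are stored in pz; the F_2 coordinates
  alpha^1_ij, alpha^2_ij, alpha^3_ij (1 <= i < j <= n) in p1, p2, p3 and
  alpha^1_ijk, alpha^2_ijk (1 <= i < j < k <= n) in q1, q2, as integers in {0,1}
  (F_2 represented by residues mod 2).  Coordinates outside the index ranges are 0.\<close>

record pel =
  pz :: "nat \<Rightarrow> int"
  p1 :: "nat \<Rightarrow> nat \<Rightarrow> int"
  p2 :: "nat \<Rightarrow> nat \<Rightarrow> int"
  p3 :: "nat \<Rightarrow> nat \<Rightarrow> int"
  q1 :: "nat \<Rightarrow> nat \<Rightarrow> nat \<Rightarrow> int"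
  q2 :: "nat \<Rightarrow> nat \<Rightarrow> nat \<Rightarrow> int"

definition pair_idx :: "nat \<Rightarrow> nat \<Rightarrow> nat \<Rightarrow> bool" where
  "pair_idx n i j \<longleftrightarrow> 1 \<le> i \<and> i < j \<and> j \<le> n"

definition triple_idx :: "nat \<Rightarrow> nat \<Rightarrow> nat \<Rightarrow> nat \<Rightarrow> bool" where
  "triple_idx n i j k \<longleftrightarrow> 1 \<le> i \<and> i < j \<and> j < k \<and> k \<le> n"

definition Pn_carrier :: "nat \<Rightarrow> pel set" where
  "Pn_carrier n = {x.
     (\<forall>l. (l < 1 \<or> 2 * n < l) \<longrightarrow> pz x l = 0) \<and>
     (\<forall>i j. if pair_idx n i j then p1 x i j \<in> {0, 1} \<and> p2 x i j \<in> {0, 1} \<and> p3 x i j \<in> {0, 1}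
            else p1 x i j = 0 \<and> p2 x i j = 0 \<and> p3 x i j = 0) \<and>
     (\<forall>i j k. if triple_idx n i j k then q1 x i j k \<in> {0, 1} \<and> q2 x i j k \<in> {0, 1}
              else q1 x i j k = 0 \<and> q2 x i j k = 0)}"

definition Pn_mult :: "nat \<Rightarrow> pel \<Rightarrow> pel \<Rightarrow> pel" where
  "Pn_mult n x y =
    (let a = pz x; b = pz y in
     \<lparr> pz = (\<lambda>l. a l + b l),
       p1 = (\<lambda>i j. if pair_idx n i j then (p1 x i j + p1 y i j + a j * b i) mod 2 else 0),
       p2 = (\<lambda>i j. if pair_idx n i j then (p2 x i j + p2 y i j + a (j + n) * b (i + n)) mod 2 else 0),
       p3 = (\<lambda>i j. if pair_idx n i j then
               (p3 x i j + p3 y i j + a (i + n) * b j + a (j + n) * b i) mod 2 else 0),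
       q1 = (\<lambda>i j k. if triple_idx n i j k then
               (q1 x i j k + q1 y i j k
                + p3 x i j * b k + p3 x i k * b j + p3 x j k * b i
                + a (i + n) * b j * b k + a (j + n) * b i * b k + a (k + n) * b i * b j) mod 2
             else 0),
       q2 = (\<lambda>i j k. if triple_idx n i j k then
               (q2 x i j k + q2 y i j k
                + p3 x i j * b (k + n) + p3 x i k * b (j + n) + p3 x j k * b (i + n)
                + a (i + n) * a (j + n) * b k + a (i + n) * a (k + n) * b j
                + a (j + n) * a (k + n) * b i
                + a (i + n) * (b j * b (k + n) + b (j + n) * b k)
                + a (j + n) * (b i * b (k + n) + b (i + n) * b k)
                + a (k + n) * (b i * b (j + n) + b (i + n) * b j)) mod 2
             else 0) \<rparr>)"

definition Pn_zero :: pel where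
  "Pn_zero = \<lparr> pz = (\<lambda>_. 0), p1 = (\<lambda>_ _. 0), p2 = (\<lambda>_ _. 0), p3 = (\<lambda>_ _. 0),
               q1 = (\<lambda>_ _ _. 0), q2 = (\<lambda>_ _ _. 0) \<rparr>"

definition Pn_group :: "nat \<Rightarrow> pel monoid" where
  "Pn_group n = \<lparr> carrier = Pn_carrier n, mult = Pn_mult n, one = Pn_zero \<rparr>"

end

theory Submission
  imports Defs "HOL-Library.Z2"
begin

text \<open>Reduction mod 2 is a ring homomorphism onto the field \<^typ>\<open>bit\<close>, so after mapping every
  \<open>\<FF>\<^sub>2\<close>-coordinate into \<^typ>\<open>bit\<close> the associative law and the inverse law become polynomial
  identities over \<open>\<FF>\<^sub>2\<close>, which ring normalisation decides.\<close>

lemma of_int_bit_eq_of_bool_odd: "(of_int x :: bit) = of_bool (odd x)"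
  by (induction x rule: int_induct[where k = 0]) auto

lemma mod_2_eq_iff_of_int_bit: "x mod 2 = y mod 2 \<longleftrightarrow> (of_int x :: bit) = of_int y"
  by (simp add: of_int_bit_eq_of_bool_odd odd_iff_mod_2_eq_one)

lemma of_int_mod_2_bit [simp]: "(of_int (x mod 2) :: bit) = of_int x"
  using mod_2_eq_iff_of_int_bit[of "x mod 2" x] by simp

lemma mod_2_eq_self_iff: "(x :: int) mod 2 = x \<longleftrightarrow> x \<in> {0, 1}"
  by auto

lemma triple_idx_imp_pair_idx:
  "triple_idx n i j k \<Longrightarrow> pair_idx n i j \<and> pair_idx n i k \<and> pair_idx n j k"
  by (auto simp: triple_idx_def pair_idx_def)

lemma Pn_mult_assoc: "Pn_mult n (Pn_mult n x y) z = Pn_mult n x (Pn_mult n y z)"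
  by (auto intro!: pel.equality ext simp: Pn_mult_def Let_def mod_2_eq_iff_of_int_bit algebra_simps
        simp del: add_bit_eq_xor mult_bit_eq_and dest!: triple_idx_imp_pair_idx)

text \<open>Obtained by solving \<open>y \<cdot> x = 0\<close> for \<open>y\<close> coordinate by coordinate; \<open>P3 i j\<close> is the
  third pair coordinate of the inverse before reduction mod 2.\<close>

definition Pn_inv :: "nat \<Rightarrow> pel \<Rightarrow> pel" where
  "Pn_inv n x =
    (let a = pz x; P3 = (\<lambda>i j. p3 x i j + a (i + n) * a j + a (j + n) * a i) in
     \<lparr> pz = (\<lambda>l. - a l),
       p1 = (\<lambda>i j. if pair_idx n i j then (p1 x i j + a j * a i) mod 2 else 0),
       p2 = (\<lambda>i j. if pair_idx n i j then (p2 x i j + a (j + n) * a (i + n)) mod 2 else 0),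
       p3 = (\<lambda>i j. if pair_idx n i j then P3 i j mod 2 else 0),
       q1 = (\<lambda>i j k. if triple_idx n i j k then
               (q1 x i j k
                + P3 i j * a k + P3 i k * a j + P3 j k * a i
                + a (i + n) * a j * a k + a (j + n) * a i * a k + a (k + n) * a i * a j) mod 2
             else 0),
       q2 = (\<lambda>i j k. if triple_idx n i j k then
               (q2 x i j k
                + P3 i j * a (k + n) + P3 i k * a (j + n) + P3 j k * a (i + n)
                + a (i + n) * a (j + n) * a k + a (i + n) * a (k + n) * a j
                + a (j + n) * a (k + n) * a i
                + a (i + n) * (a j * a (k + n) + a (j + n) * a k)
                + a (j + n) * (a i * a (k + n) + a (i + n) * a k)
                + a (k + n) * (a i * a (j + n) + a (i + n) * a j)) mod 2
             else 0) \<rparr>)"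

lemma Pn_inv_mult: "Pn_mult n (Pn_inv n x) x = Pn_zero"
  by (auto intro!: pel.equality ext
        simp: Pn_mult_def Pn_inv_def Pn_zero_def Let_def algebra_simps
          mod_2_eq_iff_of_int_bit[where y = 0, simplified]
        simp del: add_bit_eq_xor mult_bit_eq_and dest!: triple_idx_imp_pair_idx)

lemma Pn_mult_closed:
  "x \<in> Pn_carrier n \<Longrightarrow> y \<in> Pn_carrier n \<Longrightarrow> Pn_mult n x y \<in> Pn_carrier n"
  by (auto simp: Pn_carrier_def Pn_mult_def Let_def)

lemma Pn_inv_closed: "x \<in> Pn_carrier n \<Longrightarrow> Pn_inv n x \<in> Pn_carrier n"
  by (auto simp: Pn_carrier_def Pn_inv_def Let_def)

lemma Pn_zero_closed: "Pn_zero \<in> Pn_carrier n"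
  by (simp add: Pn_carrier_def Pn_zero_def)

lemma Pn_carrier_coords:
  assumes "x \<in> Pn_carrier n"
  shows "p1 x i j \<in> {0, 1}" "p2 x i j \<in> {0, 1}" "p3 x i j \<in> {0, 1}"
    and "q1 x i j k \<in> {0, 1}" "q2 x i j k \<in> {0, 1}"
    and "\<not> pair_idx n i j \<Longrightarrow> p1 x i j = 0 \<and> p2 x i j = 0 \<and> p3 x i j = 0"
    and "\<not> triple_idx n i j k \<Longrightarrow> q1 x i j k = 0 \<and> q2 x i j k = 0"
  using assms unfolding Pn_carrier_def mem_Collect_eq by (metis (full_types) insertI1 insertI2)+

lemma Pn_zero_mult:
  assumes "x \<in> Pn_carrier n"
  shows "Pn_mult n Pn_zero x = x"
  using Pn_carrier_coords[OF assms]
  by (auto intro!: pel.equality ext simp: Pn_mult_def Pn_zero_def Let_def mod_2_eq_self_iff)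

theorem proposition2p5:
  fixes n :: nat
  assumes "n \<ge> 3"
  shows "group (Pn_group n)"
proof (rule groupI)
  fix x y z
  assume "x \<in> carrier (Pn_group n)" and "y \<in> carrier (Pn_group n)"
  then show "x \<otimes>\<^bsub>Pn_group n\<^esub> y \<in> carrier (Pn_group n)"
    by (simp add: Pn_group_def Pn_mult_closed)
  show "x \<otimes>\<^bsub>Pn_group n\<^esub> y \<otimes>\<^bsub>Pn_group n\<^esub> z = x \<otimes>\<^bsub>Pn_group n\<^esub> (y \<otimes>\<^bsub>Pn_group n\<^esub> z)"
    by (simp add: Pn_group_def Pn_mult_assoc)
next
  show "\<one>\<^bsub>Pn_group n\<^esub> \<in> carrier (Pn_group n)"
    by (simp add: Pn_group_def Pn_zero_closed)
next
  fix x
  assume x: "x \<in> carrier (Pn_group n)"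
  then show "\<one>\<^bsub>Pn_group n\<^esub> \<otimes>\<^bsub>Pn_group n\<^esub> x = x"
    by (simp add: Pn_group_def Pn_zero_mult)
  show "\<exists>y \<in> carrier (Pn_group n). y \<otimes>\<^bsub>Pn_group n\<^esub> x = \<one>\<^bsub>Pn_group n\<^esub>"
    using x by (intro bexI[of _ "Pn_inv n x"]) (simp_all add: Pn_group_def Pn_inv_mult Pn_inv_closed)
qed

end
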